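(* Let $\omega(t)=\sum_{n=0}^\infty t^n\sum_{k=0}^n\binom nk^3$. Then for $|t|$ sufficiently small, \[\omega(t)=\frac{1}{1-2t}\,{}_2F_1\!\left(\frac13,\frac23;1;\frac{27t^2}{(1-2t)^3}\right),\] and for $|p|$ sufficiently small, \[\omega\!\left(\frac{p}{2(1+p)^2}\right)=(1+p)\,\omega\!\left(\frac{p^2}{4(1+p)}\right).\]
   Context: ${}_2F_1$ denotes the Gauss hypergeometric function. *)

theory Defs
  imports "HOL-Analysis.Analysis"
begin

definition franel :: "nat \<Rightarrow> nat" where
  "franel n = (\<Sum>k=0..n. (n choose k) ^ 3)"

definition omega :: "complex \<Rightarrow> complex" where
  "omega t = (\<Sum>n. of_nat (franel n) * t ^ n)"

definition hyp2F1 :: "complex \<Rightarrow> complex \<Rightarrow> complex \<Rightarrow> complex \<Rightarrow> complex" where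
  "hyp2F1 a b c z = (\<Sum>n. pochhammer a n * pochhammer b n / (pochhammer c n * fact n) * z ^ n)"

end

theory Submission
  imports Defs "HOL-Complex_Analysis.Complex_Analysis"
begin

(*
  The Franel numbers satisfy the recurrence
    (n+2)^2 f(n+2) = (7n^2+21n+16) f(n+1) + 8(n+1)^2 f(n),
  which follows by creative telescoping.  Equivalently, their generating series W is annihilated
  by a second-order operator in theta = x d/dx whose leading coefficient is a unit, and such an
  operator has at most one power series solution with a given constant term.  Both identities are
  therefore proved for formal power series by showing that the other side solves the same kind of
  equation: the hypergeometric equation for 2F1(1/3,2/3;1;z) is transported through the substitution
  z = 27x^2/(1-2x)^3 by the chain rule for theta, and W(x/(2(1+x)^2)) and (1+x) W(x^2/(4(1+x)))
  satisfy a common operator obtained in the same way from the equation of W.  Finally, all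
  coefficients grow at most geometrically, so the formal identities hold for the analytic
  functions near 0.
*)

unbundle no vec_syntax
unbundle fps_syntax

section \<open>The Franel recurrence\<close>

text \<open>The certificate produced by Zeilberger's algorithm: it turns the summand of the recurrence
  into a telescoping difference.\<close>

definition franel_cert_poly :: "real \<Rightarrow> real \<Rightarrow> real" where
  "franel_cert_poly x y = 4*y^3 - (18*x + 30)*y^2 + (27*x^2 + 93*x + 78)*y
     - (14*x^3 + 74*x^2 + 128*x + 72)"

definition franel_cert :: "nat \<Rightarrow> nat \<Rightarrow> real" where
  "franel_cert n k = (if k = 0 then 0 else real ((n + 1) choose (k - 1)) ^ 3 * franel_cert_poly n k)"

lemma real_binomial_absorb_comp:
  "(real n + 1) * real (n choose k) = (real n + 1 - real k) * real ((n + 1) choose k)"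
proof (cases "k \<le> n + 1")
  case True
  have "real ((n + 1 - k) * ((n + 1) choose k)) = real ((n + 1) * (n choose k))"
    using binomial_absorb_comp[of "n + 1" k] by simp
  then have "(real (n + 1) - real k) * real ((n + 1) choose k) = real (n + 1) * real (n choose k)"
    using True by (simp only: of_nat_mult of_nat_diff)
  then show ?thesis
    by (simp add: ac_simps)
qed (simp add: binomial_eq_0)

lemma franel_cert_poly_identity:
  fixes x y a :: real
  shows "(x + 1) * ((x + 2)^2 * ((x + 1) * (x + 2) * a)^3
      - (7*x^2 + 21*x + 16) * ((x + 2 - y) * (x + 1) * a)^3
      - 8*(x + 1)^2 * ((x + 1 - y) * (x + 2 - y) * a)^3)
   = ((x + 2 - y) * (x + 1) * a)^3 * franel_cert_poly x (y + 1)
     - (y * (x + 1) * a)^3 * franel_cert_poly x y"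
  by (simp add: franel_cert_poly_def power2_eq_square power3_eq_cube) (simp add: algebra_simps)

lemma franel_summand_telescopes:
  "(real n + 1) * ((real n + 2)^2 * real ((n + 2) choose k)^3
      - (7*real n^2 + 21*real n + 16) * real ((n + 1) choose k)^3
      - 8*(real n + 1)^2 * real (n choose k)^3)
   = franel_cert n (k + 1) - franel_cert n k"
proof -
  txt \<open>All binomial coefficients involved are polynomial multiples of a, which reduces the claim
    to a polynomial identity.\<close>
  define a where "a = real ((n + 2) choose k) / ((real n + 1) * (real n + 2))"
  have c2: "real ((n + 2) choose k) = (real n + 1) * (real n + 2) * a"
    by (simp add: a_def add_nonneg_eq_0_iff)
  have "(real n + 2) * real ((n + 1) choose k) = (real n + 2 - real k) * real ((n + 2) choose k)"
    using real_binomial_absorb_comp[of "n + 1" k] by (simp add: algebra_simps)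
  also have "\<dots> = (real n + 2) * ((real n + 2 - real k) * (real n + 1) * a)"
    unfolding c2 by (simp add: algebra_simps)
  finally have c1: "real ((n + 1) choose k) = (real n + 2 - real k) * (real n + 1) * a"
    by (simp add: add_nonneg_eq_0_iff)
  have "(real n + 1) * real (n choose k)
      = (real n + 1) * ((real n + 1 - real k) * (real n + 2 - real k) * a)"
    unfolding real_binomial_absorb_comp c1 by (simp add: algebra_simps)
  then have c0: "real (n choose k) = (real n + 1 - real k) * (real n + 2 - real k) * a"
    by (simp add: add_nonneg_eq_0_iff)
  have g0: "franel_cert n k = (real k * (real n + 1) * a)^3 * franel_cert_poly n k"
  proof (cases k)
    case (Suc j)
    have "(n + 2) * ((n + 1) choose j) = k * ((n + 2) choose k)"
      using binomial_absorption[of j "n + 2"] Suc by simp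
    then have "(real n + 2) * real ((n + 1) choose j) = real k * real ((n + 2) choose k)"
      by (metis of_nat_add of_nat_mult of_nat_numeral)
    also have "\<dots> = (real n + 2) * (real k * (real n + 1) * a)"
      unfolding c2 by (simp add: algebra_simps)
    finally show ?thesis
      using Suc by (simp add: franel_cert_def add_nonneg_eq_0_iff)
  qed (simp add: franel_cert_def)
  have g1: "franel_cert n (k + 1) = real ((n + 1) choose k)^3 * franel_cert_poly n (real k + 1)"
    by (simp add: franel_cert_def add.commute)
  show ?thesis
    unfolding g0 g1 c2 c1 c0 by (rule franel_cert_poly_identity)
qed

lemma franel_eq_sum_upto:
  assumes "n \<le> N"
  shows "franel n = (\<Sum>k=0..N. (n choose k)^3)"
  unfolding franel_def using assms
  by (intro sum.mono_neutral_left) (auto simp: binomial_eq_0)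

lemma franel_recurrence:
  "(n + 2)^2 * franel (n + 2) = (7*n^2 + 21*n + 16) * franel (n + 1) + 8*(n + 1)^2 * franel n"
proof -
  have real_franel: "(\<Sum>k=0..n+2. real (m choose k)^3) = real (franel m)" if "m \<le> n + 2" for m
    using franel_eq_sum_upto[OF that] by simp
  have "0 = franel_cert n (Suc (n + 2)) - franel_cert n 0"
    by (simp add: franel_cert_def binomial_eq_0)
  also have "\<dots> = (\<Sum>k=0..n+2. franel_cert n (Suc k) - franel_cert n k)"
    by (rule sum_Suc_diff[symmetric]) simp
  also have "\<dots> = (\<Sum>k=0..n+2. (real n + 1) * ((real n + 2)^2 * real ((n + 2) choose k)^3
      - (7*real n^2 + 21*real n + 16) * real ((n + 1) choose k)^3
      - 8*(real n + 1)^2 * real (n choose k)^3))"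
    by (intro sum.cong refl) (simp only: franel_summand_telescopes Suc_eq_plus1)
  also have "\<dots> = (real n + 1) * ((real n + 2)^2 * real (franel (n + 2))
      - (7*real n^2 + 21*real n + 16) * real (franel (n + 1)) - 8*(real n + 1)^2 * real (franel n))"
    by (simp only: sum_distrib_left[symmetric] sum_subtractf real_franel le_add1 order.refl
        add_left_mono one_le_numeral)
  finally have "real ((n + 2)^2 * franel (n + 2))
      = real ((7*n^2 + 21*n + 16) * franel (n + 1) + 8*(n + 1)^2 * franel n)"
    by (simp add: add_nonneg_eq_0_iff add.commute)
  then show ?thesis
    by (simp only: of_nat_eq_iff)
qed

section \<open>The Euler operator on formal power series\<close>

definition fps_theta :: "'a::comm_ring_1 fps \<Rightarrow> 'a fps" where
  "fps_theta f = fps_X * fps_deriv f"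

lemma fps_theta_nth [simp]: "fps_theta f $ n = of_nat n * f $ n"
  by (cases n) (simp_all add: fps_theta_def)

lemma fps_theta_add [simp]: "fps_theta (f + g) = fps_theta f + fps_theta g"
  by (simp add: fps_theta_def algebra_simps)

lemma fps_theta_diff [simp]: "fps_theta (f - g) = fps_theta f - fps_theta g"
  by (simp add: fps_theta_def algebra_simps)

lemma fps_theta_mult [simp]: "fps_theta (f * g) = fps_theta f * g + f * fps_theta g"
  by (simp add: fps_theta_def algebra_simps)

lemma fps_theta_X [simp]: "fps_theta fps_X = fps_X"
  by (simp add: fps_theta_def)

lemma fps_theta_one [simp]: "fps_theta 1 = 0"
  by (simp add: fps_theta_def)

lemma fps_theta_numeral [simp]: "fps_theta (numeral k) = 0"
  by (simp add: fps_theta_def)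

lemma fps_theta_compose:
  fixes F G :: "'a::idom fps"
  assumes "G $ 0 = 0"
  shows "G * fps_theta (F oo G) = fps_theta G * (fps_theta F oo G)"
  by (simp add: fps_theta_def fps_compose_deriv fps_compose_mult_distrib assms algebra_simps)

lemma fps_theta_compose_chain_rule:
  fixes F G p q :: "'a::idom fps"
  assumes "G $ 0 = 0" "G \<noteq> 0" "p * fps_theta G = q * G"
  shows "p * fps_theta (F oo G) = q * (fps_theta F oo G)"
proof -
  have "G * (p * fps_theta (F oo G)) = p * (G * fps_theta (F oo G))"
    by (simp only: mult.left_commute)
  also have "\<dots> = (p * fps_theta G) * (fps_theta F oo G)"
    by (simp only: fps_theta_compose[OF assms(1)] mult.assoc)
  also have "\<dots> = G * (q * (fps_theta F oo G))"
    by (simp only: assms(3) ac_simps)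
  finally show ?thesis
    using assms(2) by simp
qed

definition fps_theta_ode ::
    "'a::comm_ring_1 fps \<Rightarrow> 'a fps \<Rightarrow> 'a fps \<Rightarrow> 'a fps \<Rightarrow> 'a fps" where
  "fps_theta_ode a b c y = a * fps_theta (fps_theta y) + b * fps_theta y + c * y"

lemma fps_theta_ode_compose:
  fixes a b c y G :: "'a::idom fps"
  assumes "G $ 0 = 0"
  shows "fps_theta_ode a b c y oo G = (a oo G) * (fps_theta (fps_theta y) oo G)
           + (b oo G) * (fps_theta y oo G) + (c oo G) * (y oo G)"
  by (simp add: fps_theta_ode_def fps_compose_add_distrib fps_compose_mult_distrib[OF assms])

text \<open>At the lowest nonvanishing coefficient n > 0 of y - z, the equation reads
  a_0 n^2 (y - z)_n = 0.\<close>

lemma fps_theta_ode_unique: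
  fixes y z :: "'a::{idom, ring_char_0} fps"
  assumes "a $ 0 \<noteq> 0" "b $ 0 = 0" "c $ 0 = 0"
    and "fps_theta_ode a b c y = fps_theta_ode a b c z" "y $ 0 = z $ 0"
  shows "y = z"
proof (rule ccontr)
  define d where "d = y - z"
  define n where "n = subdegree d"
  assume "y \<noteq> z"
  then have "d \<noteq> 0"
    by (simp add: d_def)
  then have "d $ n \<noteq> 0"
    by (simp add: n_def)
  moreover from this have "n \<noteq> 0"
    using assms(5) by (cases n) (simp_all add: d_def)
  moreover have "fps_theta_ode a b c d $ n = a $ 0 * (of_nat n * (of_nat n * d $ n))"
  proof -
    have low_mult: "(f * g) $ n = f $ 0 * g $ n"
      if "\<And>k. k < n \<Longrightarrow> g $ k = 0" for f g :: "'a fps"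
      unfolding fps_mult_nth using that
      by (subst sum.mono_neutral_right[where S = "{0}"]) auto
    have "d $ k = 0" if "k < n" for k
      using that by (simp add: n_def nth_less_subdegree_zero)
    then show ?thesis
      by (simp add: fps_theta_ode_def low_mult assms(2,3))
  qed
  moreover have "fps_theta_ode a b c d = 0"
    using assms(4) by (simp add: d_def fps_theta_ode_def algebra_simps)
  ultimately show False
    using assms(1) by simp
qed

section \<open>The differential equation of the Franel generating series\<close>

definition franel_fps :: "'a::comm_ring_1 fps" where
  "franel_fps = Abs_fps (\<lambda>n. of_nat (franel n))"

definition franel_ode :: "'a::comm_ring_1 fps \<Rightarrow> 'a fps" where
  "franel_ode =
     fps_theta_ode (1 - 7*fps_X - 8*fps_X^2) (- 7*fps_X - 16*fps_X^2) (- 2*fps_X - 8*fps_X^2)"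

lemma franel_ode_franel_fps: "franel_ode franel_fps = 0"
proof (rule fps_ext)
  fix m :: nat
  consider "m = 0" | "m = 1" | n where "m = n + 2"
    by atomize_elim arith
  then show "franel_ode franel_fps $ m = (0 :: 'a fps) $ m"
  proof cases
    case 3
    have "of_nat ((n + 2)^2 * franel (n + 2)) =
        (of_nat ((7*n^2 + 21*n + 16) * franel (n + 1) + 8*(n + 1)^2 * franel n) :: 'a)"
      by (simp only: franel_recurrence)
    with 3 show ?thesis
      by (simp add: franel_ode_def fps_theta_ode_def franel_fps_def ring_distribs
          fps_X_power_mult_nth mult.assoc) (simp add: algebra_simps power2_eq_square)
  qed (auto simp: franel_ode_def fps_theta_ode_def franel_fps_def ring_distribs
      fps_X_power_mult_nth mult.assoc franel_def)
qed

lemma franel_ode_unique: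
  fixes y z :: "'a::{idom, ring_char_0} fps"
  assumes "franel_ode y = franel_ode z" "y $ 0 = z $ 0"
  shows "y = z"
  using assms unfolding franel_ode_def
  by (rule fps_theta_ode_unique[rotated 3]) simp_all

lemma franel_ode_franel_fps_compose:
  fixes G :: "'a::idom fps"
  assumes "G $ 0 = 0"
  shows "(1 - 7 * G - 8 * G^2) * (fps_theta (fps_theta franel_fps) oo G)
    + (- 7 * G - 16 * G^2) * (fps_theta franel_fps oo G)
    + (- 2 * G - 8 * G^2) * (franel_fps oo G) = 0"
  using arg_cong[OF franel_ode_franel_fps, of "\<lambda>F. F oo G"] assms
  by (simp add: franel_ode_def fps_theta_ode_compose fps_compose_sub_distrib
      fps_compose_add_distrib fps_compose_mult_distrib fps_compose_uminus
      fps_compose_power[symmetric] del: fps_const_neg)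

section \<open>The hypergeometric series\<close>

definition fps_hyp2F1 :: "'a \<Rightarrow> 'a \<Rightarrow> 'a \<Rightarrow> 'a::field_char_0 fps" where
  "fps_hyp2F1 a b c =
     Abs_fps (\<lambda>n. pochhammer a n * pochhammer b n / (pochhammer c n * fact n))"

lemma fps_hyp2F1_nth_Suc:
  assumes "c \<notin> \<int>\<^sub>\<le>\<^sub>0"
  shows "(c + of_nat n) * of_nat (Suc n) * fps_hyp2F1 a b c $ Suc n
           = (a + of_nat n) * (b + of_nat n) * fps_hyp2F1 a b c $ n"
proof -
  have "pochhammer c n \<noteq> 0" "c + of_nat n \<noteq> 0"
    using assms by (auto simp: pochhammer_eq_0_iff add_eq_0_iff2)
  moreover have "(1 + of_nat n :: 'a) \<noteq> 0"
    using of_nat_neq_0[of n] by simp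
  ultimately show ?thesis
    by (simp add: fps_hyp2F1_def pochhammer_Suc divide_simps)
qed

text \<open>The hypergeometric equation theta (theta + c - 1) F = x (theta + a) (theta + b) F.\<close>

lemma fps_hyp2F1_ode:
  assumes "c \<notin> \<int>\<^sub>\<le>\<^sub>0"
  shows "fps_theta_ode (1 - fps_X) (fps_const (c - 1) - fps_const (a + b) * fps_X)
           (- fps_const (a * b) * fps_X) (fps_hyp2F1 a b c) = 0"
proof (rule fps_ext)
  fix m :: nat
  show "fps_theta_ode (1 - fps_X) (fps_const (c - 1) - fps_const (a + b) * fps_X)
           (- fps_const (a * b) * fps_X) (fps_hyp2F1 a b c) $ m = 0 $ m"
  proof (cases m)
    case (Suc n)
    show ?thesis
      using fps_hyp2F1_nth_Suc[OF assms, of n a b] Suc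
      by (simp add: fps_theta_ode_def ring_distribs algebra_simps)
  qed (simp add: fps_theta_ode_def)
qed

section \<open>The Franel series as a hypergeometric series\<close>

lemma one_minus_two_fps_X_nonzero: "1 - 2 * fps_X \<noteq> (0 :: 'a::comm_ring_1 fps)"
  by (rule fps_nonzeroI[of _ 0]) simp

text \<open>The eliminations below need rational coefficients, and power series do not form a field;
  they are carried out in the field of formal Laurent series, into which power series embed
  by the ring homomorphism below.\<close>

lemmas fps_to_fls_ring_hom = fps_to_fls_plus fps_to_fls_minus fps_to_fls_uminus
  fls_times_fps_to_fls fps_to_fls_power fps_to_fls_numeral fps_zero_to_fls fps_one_to_fls fps_X_to_fls

definition fps_Z :: "'a::field fps" where
  "fps_Z = 27 * fps_X^2 / (1 - 2 * fps_X)^3"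

lemma fps_Z_nth_0 [simp]: "fps_Z $ 0 = 0"
  by (simp add: fps_Z_def fps_divide_unit)

lemma fps_Z_times: "fps_Z * (1 - 2 * fps_X)^3 = (27 * fps_X^2 :: 'a::field fps)"
  unfolding fps_Z_def by (simp add: fps_divide_unit mult.assoc inverse_mult_eq_1)

lemma fps_Z_nonzero: "fps_Z \<noteq> (0 :: 'a::field_char_0 fps)"
  using fps_Z_times
  by (metis fps_X_neq_zero mult_zero_left power_not_zero zero_neq_numeral mult_eq_0_iff)

lemma fps_theta_fps_Z:
  "(1 - 2 * fps_X) * fps_theta fps_Z = 2 * (1 + fps_X) * (fps_Z :: 'a::field_char_0 fps)"
proof -
  have deriv: "fps_theta fps_Z * (1 - 2 * fps_X)^3 - 6 * fps_X * (1 - 2 * fps_X)^2 * fps_Z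
      = (54 * fps_X^2 :: 'a fps)"
    using arg_cong[OF fps_Z_times, of fps_theta]
    by (simp add: power2_eq_square power3_eq_cube algebra_simps)
  have "(1 - 2 * fps_X)^2 * ((1 - 2 * fps_X) * fps_theta fps_Z - 2 * (1 + fps_X) * fps_Z)
      = (fps_theta fps_Z * (1 - 2 * fps_X)^3 - 6 * fps_X * (1 - 2 * fps_X)^2 * fps_Z - 54 * fps_X^2)
        - 2 * (fps_Z * (1 - 2 * fps_X)^3 - 27 * fps_X^2 :: 'a fps)"
    by algebra
  also have "\<dots> = 0"
    by (simp only: deriv fps_Z_times diff_self mult_zero_right)
  finally show ?thesis
    using one_minus_two_fps_X_nonzero by simp
qed

text \<open>Here x is the variable, z stands for Z, h_i for (theta^i H) o Z, g_i for theta^i (H o Z),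
  k1 for theta ((theta H) o Z) and r_i for theta^i R, where R = (H o Z) / (1 - 2x).\<close>

lemma franel_ode_elimination:
  fixes x z h0 h1 h2 g1 g2 k1 r r1 r2 :: "'a::field_char_0"
  assumes "9 * (1 - z) * h2 - 9 * z * h1 - 2 * z * h0 = 0"
    and "z * (1 - 2 * x)^3 = 27 * x^2"
    and "(1 - 2 * x) * g1 = 2 * (1 + x) * h1"
    and "- 2 * x * g1 + (1 - 2 * x) * g2 = 2 * x * h1 + 2 * (1 + x) * k1"
    and "(1 - 2 * x) * k1 = 2 * (1 + x) * h2"
    and "r * (1 - 2 * x) = h0"
    and "r1 * (1 - 2 * x) - 2 * x * r = g1"
    and "r2 * (1 - 2 * x) - 4 * x * r1 - 2 * x * r = g2"
  shows "(1 - 2 * x)^3 * ((1 - 7 * x - 8 * x^2) * r2 + (- 7 * x - 16 * x^2) * r1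
           + (- 2 * x - 8 * x^2) * r) = 0"
  using assms by algebra

lemma fps_theta_compose_fps_Z:
  "(1 - 2 * fps_X) * fps_theta (F oo fps_Z)
     = 2 * (1 + fps_X) * (fps_theta F oo fps_Z :: 'a::field_char_0 fps)"
  by (rule fps_theta_compose_chain_rule[OF fps_Z_nth_0 fps_Z_nonzero fps_theta_fps_Z])

lemma fps_hyp2F1_compose_fps_Z_ode:
  fixes H :: "'a::field_char_0 fps"
  defines "H \<equiv> fps_hyp2F1 (1/3) (2/3) 1"
  shows "9 * (1 - fps_Z) * (fps_theta (fps_theta H) oo fps_Z)
    - 9 * fps_Z * (fps_theta H oo fps_Z) - 2 * fps_Z * (H oo fps_Z) = 0"
proof -
  have "fps_theta_ode (1 - fps_X) (fps_const (1 - 1) - fps_const (1/3 + 2/3) * fps_X)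
           (- fps_const (1/3 * (2/3)) * fps_X) H oo fps_Z = 0"
    unfolding H_def by (subst fps_hyp2F1_ode) simp_all
  then have "(1 - fps_Z) * (fps_theta (fps_theta H) oo fps_Z) - fps_Z * (fps_theta H oo fps_Z)
      - fps_const (2/9) * fps_Z * (H oo fps_Z) = 0"
    by (simp add: fps_theta_ode_compose fps_compose_sub_distrib fps_compose_mult_distrib
        fps_compose_uminus del: fps_const_neg)
  moreover have "9 * fps_const (2/9) = (2 :: 'a fps)"
    by (simp add: fps_numeral_fps_const)
  ultimately show ?thesis
    by algebra
qed

lemma franel_ode_hyp2F1_subst:
  fixes H :: "'a::field_char_0 fps"
  defines "H \<equiv> fps_hyp2F1 (1/3) (2/3) 1"
  shows "franel_ode ((H oo fps_Z) / (1 - 2 * fps_X)) = 0"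
proof -
  define R where "R = (H oo fps_Z) / (1 - 2 * fps_X)"
  have gauge: "R * (1 - 2 * fps_X) = H oo fps_Z"
    unfolding R_def by (simp add: fps_divide_unit mult.assoc inverse_mult_eq_1)
  have gauge_theta: "fps_theta R * (1 - 2 * fps_X) - 2 * fps_X * R = fps_theta (H oo fps_Z)"
    using arg_cong[OF gauge, of fps_theta] by (simp add: algebra_simps)
  have gauge_theta_theta:
    "fps_theta (fps_theta R) * (1 - 2 * fps_X) - 4 * fps_X * fps_theta R - 2 * fps_X * R
      = fps_theta (fps_theta (H oo fps_Z))"
    using arg_cong[OF gauge_theta, of fps_theta] by (simp add: algebra_simps)
  have chain_theta:
    "- 2 * fps_X * fps_theta (H oo fps_Z) + (1 - 2 * fps_X) * fps_theta (fps_theta (H oo fps_Z))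
      = 2 * fps_X * (fps_theta H oo fps_Z) + 2 * (1 + fps_X) * fps_theta (fps_theta H oo fps_Z)"
    using arg_cong[OF fps_theta_compose_fps_Z[of H], of fps_theta] by (simp add: algebra_simps)
  from fps_hyp2F1_compose_fps_Z_ode fps_Z_times fps_theta_compose_fps_Z[of H] chain_theta
    fps_theta_compose_fps_Z[of "fps_theta H"] gauge gauge_theta gauge_theta_theta
  have "fps_to_fls ((1 - 2 * fps_X)^3 * franel_ode R) = 0"
    unfolding franel_ode_def fps_theta_ode_def H_def
    by (simp (no_asm_use) only: fps_to_fls_eq_iff[symmetric] fps_to_fls_ring_hom)
      (rule franel_ode_elimination)
  then show ?thesis
    using one_minus_two_fps_X_nonzero by (simp add: R_def)
qed

lemma franel_fps_eq_hyp2F1: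
  "franel_fps = (fps_hyp2F1 (1/3) (2/3) 1 oo fps_Z) / (1 - 2 * fps_X :: 'a::field_char_0 fps)"
proof (rule franel_ode_unique)
  show "franel_ode franel_fps
      = franel_ode ((fps_hyp2F1 (1/3) (2/3) 1 oo fps_Z) / (1 - 2 * fps_X))"
    by (simp add: franel_ode_franel_fps franel_ode_hyp2F1_subst)
qed (simp add: fps_divide_unit fps_hyp2F1_def franel_fps_def franel_def)

section \<open>The modular relation\<close>

definition fps_U :: "'a::field_char_0 fps" where
  "fps_U = fps_X / (2 * (1 + fps_X)^2)"

definition fps_V :: "'a::field_char_0 fps" where
  "fps_V = fps_X^2 / (4 * (1 + fps_X))"

lemma fps_U_nth_0 [simp]: "fps_U $ 0 = 0"
  by (simp add: fps_U_def fps_divide_unit fps_nth_power_0)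

lemma fps_V_nth_0 [simp]: "fps_V $ 0 = 0"
  by (simp add: fps_V_def fps_divide_unit fps_nth_power_0)

lemma fps_U_times: "fps_U * (2 * (1 + fps_X)^2) = (fps_X :: 'a::field_char_0 fps)"
  unfolding fps_U_def
  by (simp add: fps_divide_unit mult.assoc inverse_mult_eq_1 fps_nth_power_0)

lemma fps_V_times: "fps_V * (4 * (1 + fps_X)) = (fps_X^2 :: 'a::field_char_0 fps)"
  unfolding fps_V_def by (simp add: fps_divide_unit mult.assoc inverse_mult_eq_1)

lemma fps_U_nonzero: "fps_U \<noteq> (0 :: 'a::field_char_0 fps)"
  using fps_U_times by (metis fps_X_neq_zero mult_zero_left)

lemma fps_V_nonzero: "fps_V \<noteq> (0 :: 'a::field_char_0 fps)"
  using fps_V_times by (metis fps_X_neq_zero mult_zero_left power_not_zero)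

lemma one_plus_fps_X_nonzero: "1 + fps_X \<noteq> (0 :: 'a::comm_ring_1 fps)"
  by (rule fps_nonzeroI[of _ 0]) simp

lemma fps_theta_fps_U:
  "(1 + fps_X) * fps_theta fps_U = (1 - fps_X) * (fps_U :: 'a::field_char_0 fps)"
proof -
  have deriv: "fps_theta fps_U * (2 * (1 + fps_X)^2) + fps_U * (4 * fps_X * (1 + fps_X))
      = (fps_X :: 'a fps)"
    using arg_cong[OF fps_U_times, of fps_theta] by (simp add: power2_eq_square algebra_simps)
  have "2 * (1 + fps_X) * ((1 + fps_X) * fps_theta fps_U - (1 - fps_X) * fps_U)
      = (fps_theta fps_U * (2 * (1 + fps_X)^2) + fps_U * (4 * fps_X * (1 + fps_X)) - fps_X)
        - (fps_U * (2 * (1 + fps_X)^2) - fps_X :: 'a fps)"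
    by algebra
  also have "\<dots> = 0"
    by (simp only: deriv fps_U_times diff_self mult_zero_right)
  finally show ?thesis
    using one_plus_fps_X_nonzero by simp
qed

lemma fps_theta_fps_V:
  "(1 + fps_X) * fps_theta fps_V = (2 + fps_X) * (fps_V :: 'a::field_char_0 fps)"
proof -
  have deriv: "fps_theta fps_V * (4 * (1 + fps_X)) + fps_V * (4 * fps_X) = (2 * fps_X^2 :: 'a fps)"
    using arg_cong[OF fps_V_times, of fps_theta] by (simp add: power2_eq_square algebra_simps)
  have "4 * ((1 + fps_X) * fps_theta fps_V - (2 + fps_X) * fps_V)
      = (fps_theta fps_V * (4 * (1 + fps_X)) + fps_V * (4 * fps_X) - 2 * fps_X^2)
        - 2 * (fps_V * (4 * (1 + fps_X)) - fps_X^2 :: 'a fps)"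
    by algebra
  also have "\<dots> = 0"
    by (simp only: deriv fps_V_times diff_self mult_zero_right)
  finally show ?thesis
    by simp
qed

text \<open>The pullback of the Franel operator along U; up to a factor, it is also the pullback along V
  twisted by the gauge factor 1 + x.  This coincidence is the modular relation.\<close>

definition franel_modular_ode :: "'a::comm_ring_1 fps \<Rightarrow> 'a fps" where
  "franel_modular_ode = fps_theta_ode ((2 + 5 * fps_X + 2 * fps_X^2) * (1 + fps_X)^2 * (1 - fps_X))
     (- (3 * fps_X + 12 * fps_X^2 + 3 * fps_X^3) * (1 + fps_X))
     (- 2 * fps_X * (1 + 4 * fps_X + fps_X^2) * (1 - fps_X))"

lemma franel_modular_ode_unique:
  fixes y z :: "'a::{idom, ring_char_0} fps"
  assumes "franel_modular_ode y = franel_modular_ode z" "y $ 0 = z $ 0"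
  shows "y = z"
  using assms unfolding franel_modular_ode_def
  by (rule fps_theta_ode_unique[rotated 3]) (simp_all add: fps_nth_power_0)

lemma fps_theta_compose_fps_U:
  "(1 + fps_X) * fps_theta (F oo fps_U)
     = (1 - fps_X) * (fps_theta F oo fps_U :: 'a::field_char_0 fps)"
  by (rule fps_theta_compose_chain_rule[OF fps_U_nth_0 fps_U_nonzero fps_theta_fps_U])

lemma fps_theta_compose_fps_V:
  "(1 + fps_X) * fps_theta (F oo fps_V)
     = (2 + fps_X) * (fps_theta F oo fps_V :: 'a::field_char_0 fps)"
  by (rule fps_theta_compose_chain_rule[OF fps_V_nth_0 fps_V_nonzero fps_theta_fps_V])

text \<open>In the two eliminations below, x is the variable, u and v stand for U and V, w_i for
  (theta^i W) o U resp. (theta^i W) o V, g_i for theta^i (W o U) resp. theta^i (W o V), k1 for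
  theta ((theta W) o U) resp. theta ((theta W) o V), and y_i for theta^i ((1 + x) (W o V)).\<close>

lemma franel_modular_ode_elimination_U:
  fixes x u w0 w1 w2 g1 g2 k1 :: "'a::field_char_0"
  assumes "(1 - 7 * u - 8 * u^2) * w2 + (- 7 * u - 16 * u^2) * w1 + (- 2 * u - 8 * u^2) * w0 = 0"
    and "u * (2 * (1 + x)^2) = x"
    and "(1 + x) * g1 = (1 - x) * w1"
    and "x * g1 + (1 + x) * g2 = - x * w1 + (1 - x) * k1"
    and "(1 + x) * k1 = (1 - x) * w2"
  shows "(1 + x)^2 * ((2 + 5 * x + 2 * x^2) * (1 + x)^2 * (1 - x) * g2
     + (- (3 * x + 12 * x^2 + 3 * x^3) * (1 + x)) * g1
     + (- 2 * x * (1 + 4 * x + x^2) * (1 - x)) * w0) = 0"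
  using assms by algebra

lemma franel_modular_ode_elimination_V:
  fixes x v w0 w1 w2 g1 g2 k1 y y1 y2 :: "'a::field_char_0"
  assumes "(1 - 7 * v - 8 * v^2) * w2 + (- 7 * v - 16 * v^2) * w1 + (- 2 * v - 8 * v^2) * w0 = 0"
    and "v * (4 * (1 + x)) = x^2"
    and "(1 + x) * g1 = (2 + x) * w1"
    and "x * g1 + (1 + x) * g2 = x * w1 + (2 + x) * k1"
    and "(1 + x) * k1 = (2 + x) * w2"
    and "y = (1 + x) * w0"
    and "y1 = x * w0 + (1 + x) * g1"
    and "y2 = x * w0 + 2 * x * g1 + (1 + x) * g2"
  shows "(1 + x)^3 * ((2 + 5 * x + 2 * x^2) * (1 + x)^2 * (1 - x) * y2
     + (- (3 * x + 12 * x^2 + 3 * x^3) * (1 + x)) * y1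
     + (- 2 * x * (1 + 4 * x + x^2) * (1 - x)) * y) = 0"
  using assms by algebra

lemma franel_modular_ode_compose_fps_U:
  "franel_modular_ode (franel_fps oo fps_U) = (0 :: 'a::field_char_0 fps)"
proof -
  define W :: "'a fps" where "W = franel_fps"
  have chain_theta:
    "fps_X * fps_theta (W oo fps_U) + (1 + fps_X) * fps_theta (fps_theta (W oo fps_U))
      = - fps_X * (fps_theta W oo fps_U) + (1 - fps_X) * fps_theta (fps_theta W oo fps_U)"
    using arg_cong[OF fps_theta_compose_fps_U[of W], of fps_theta] by (simp add: algebra_simps)
  from franel_ode_franel_fps_compose[OF fps_U_nth_0] fps_U_times fps_theta_compose_fps_U[of W]
    chain_theta fps_theta_compose_fps_U[of "fps_theta W"]
  have "fps_to_fls ((1 + fps_X)^2 * franel_modular_ode (W oo fps_U)) = 0"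
    unfolding franel_modular_ode_def fps_theta_ode_def W_def
    by (simp (no_asm_use) only: fps_to_fls_eq_iff[symmetric] fps_to_fls_ring_hom)
      (rule franel_modular_ode_elimination_U)
  then show ?thesis
    using one_plus_fps_X_nonzero by (simp add: W_def)
qed

lemma franel_modular_ode_compose_fps_V:
  "franel_modular_ode ((1 + fps_X) * (franel_fps oo fps_V)) = (0 :: 'a::field_char_0 fps)"
proof -
  define W :: "'a fps" where "W = franel_fps"
  have chain_theta:
    "fps_X * fps_theta (W oo fps_V) + (1 + fps_X) * fps_theta (fps_theta (W oo fps_V))
      = fps_X * (fps_theta W oo fps_V) + (2 + fps_X) * fps_theta (fps_theta W oo fps_V)"
    using arg_cong[OF fps_theta_compose_fps_V[of W], of fps_theta] by (simp add: algebra_simps)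
  have theta: "fps_theta ((1 + fps_X) * (W oo fps_V))
      = fps_X * (W oo fps_V) + (1 + fps_X) * fps_theta (W oo fps_V)"
    by simp
  have theta_theta: "fps_theta (fps_theta ((1 + fps_X) * (W oo fps_V)))
      = fps_X * (W oo fps_V) + 2 * fps_X * fps_theta (W oo fps_V)
        + (1 + fps_X) * fps_theta (fps_theta (W oo fps_V))"
    by (simp add: algebra_simps)
  from franel_ode_franel_fps_compose[OF fps_V_nth_0] fps_V_times fps_theta_compose_fps_V[of W]
    chain_theta fps_theta_compose_fps_V[of "fps_theta W"] theta theta_theta
  have "fps_to_fls ((1 + fps_X)^3 * franel_modular_ode ((1 + fps_X) * (W oo fps_V))) = 0"
    unfolding franel_modular_ode_def fps_theta_ode_def W_def
    by (simp (no_asm_use) only: fps_to_fls_eq_iff[symmetric] fps_to_fls_ring_hom)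
      (rule franel_modular_ode_elimination_V; (assumption | rule refl))
  then show ?thesis
    using one_plus_fps_X_nonzero by (simp add: W_def)
qed

lemma franel_fps_modular_relation:
  "franel_fps oo fps_U = (1 + fps_X) * (franel_fps oo fps_V :: 'a::field_char_0 fps)"
  by (rule franel_modular_ode_unique)
    (simp_all add: franel_modular_ode_compose_fps_U franel_modular_ode_compose_fps_V)

section \<open>Convergence\<close>

lemma summable_fps_geometric_bound:
  fixes F :: "'a::{banach, real_normed_div_algebra} fps"
  assumes bound: "\<And>n. norm (F $ n) \<le> M ^ n" and "norm z * M < 1"
  shows "summable (\<lambda>n. F $ n * z ^ n)"
proof (rule summable_comparison_test')
  have "0 \<le> M"
    using order_trans[OF norm_ge_zero bound[of 1]] by simp
  then show "summable (\<lambda>n. (norm z * M) ^ n)"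
    using assms(2) by (intro summable_geometric) simp
  fix n
  have "norm (F $ n * z ^ n) = norm (F $ n) * norm z ^ n"
    by (simp add: norm_mult norm_power)
  also have "\<dots> \<le> M ^ n * norm z ^ n"
    by (intro mult_right_mono bound) simp
  finally show "norm (F $ n * z ^ n) \<le> (norm z * M) ^ n"
    by (simp add: power_mult_distrib mult.commute)
qed

lemma has_fps_expansion_geometric_bound:
  fixes F :: "'a::{banach, real_normed_div_algebra} fps"
  assumes bound: "\<And>n. norm (F $ n) \<le> M ^ n"
  shows "eval_fps F has_fps_expansion F"
proof (rule eval_fps_has_fps_expansion)
  have "0 \<le> M"
    using order_trans[OF norm_ge_zero bound[of 1]] by simp
  define r where "r = 1 / (2 * (M + 1))"
  have r: "0 < r" "r * M < 1"
    using \<open>0 \<le> M\<close> by (simp_all add: r_def field_simps)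
  have "ereal r \<le> fps_conv_radius F"
    unfolding fps_conv_radius_def
    using conv_radius_geI[OF summable_fps_geometric_bound[OF bound, of "of_real r"]] r by simp
  moreover have "0 < ereal r"
    using r(1) by simp
  ultimately show "0 < fps_conv_radius F"
    by (rule order.strict_trans2[rotated])
qed

lemma has_fps_expansion_imp_eventually_eq:
  assumes "f has_fps_expansion F" "g has_fps_expansion F"
  shows "eventually (\<lambda>z. f z = g z) (nhds 0)"
proof -
  have "eventually (\<lambda>z. eval_fps F z = f z) (nhds 0)"
    and "eventually (\<lambda>z. eval_fps F z = g z) (nhds 0)"
    using assms by (auto simp: has_fps_expansion_def)
  then show ?thesis
    by eventually_elim simp
qed

lemma franel_le: "franel n \<le> 8 ^ n"
proof -
  have "franel n \<le> (\<Sum>k\<le>n. (n choose k) * 4 ^ n)"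
    unfolding franel_def atLeast0AtMost
  proof (rule sum_mono)
    fix k
    have "(n choose k)^2 \<le> (2 ^ n)^2"
      by (intro power_mono binomial_le_pow2) simp
    then show "(n choose k)^3 \<le> (n choose k) * 4 ^ n"
      by (simp add: power3_eq_cube power2_eq_square power_mult_distrib[symmetric])
  qed
  also have "\<dots> = 2 ^ n * 4 ^ n"
    by (simp add: sum_distrib_right[symmetric] choose_row_sum)
  also have "\<dots> = 8 ^ n"
    by (simp add: power_mult_distrib[symmetric])
  finally show ?thesis .
qed

lemma omega_eq_eval_fps: "omega = eval_fps franel_fps"
  by (simp add: fun_eq_iff omega_def eval_fps_def franel_fps_def)

lemma hyp2F1_eq_eval_fps: "hyp2F1 a b c = eval_fps (fps_hyp2F1 a b c)"
  by (simp add: fun_eq_iff hyp2F1_def eval_fps_def fps_hyp2F1_def)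

lemma norm_franel_fps_nth: "norm (franel_fps $ n :: complex) \<le> 8 ^ n"
  using franel_le[of n] by (simp add: franel_fps_def of_nat_le_iff[symmetric])

lemma norm_fps_hyp2F1_nth: "norm (fps_hyp2F1 (1/3) (2/3) 1 $ n :: complex) \<le> 1 ^ n"
proof (induction n)
  case (Suc n)
  define F :: "complex fps" where "F = fps_hyp2F1 (1/3) (2/3) 1"
  have "of_real ((real n + 1)^2) * F $ Suc n = of_real ((1/3 + real n) * (2/3 + real n)) * F $ n"
    using fps_hyp2F1_nth_Suc[of 1 n "1/3" "2/3"] by (simp add: F_def power2_eq_square algebra_simps)
  then have "norm (of_real ((real n + 1)^2) * F $ Suc n)
      = norm (of_real ((1/3 + real n) * (2/3 + real n)) * F $ n)"
    by (rule arg_cong)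
  moreover have "0 \<le> (1/3 + real n) * (2/3 + real n)"
    by simp
  ultimately have "(real n + 1)^2 * norm (F $ Suc n) = (1/3 + real n) * (2/3 + real n) * norm (F $ n)"
    by (simp only: norm_mult norm_of_real abs_of_nonneg zero_le_power2)
  also have "\<dots> \<le> (real n + 1)^2 * 1"
    using Suc.IH by (intro mult_mono) (simp_all add: F_def power2_eq_square algebra_simps)
  finally show ?case
    by (simp add: F_def)
qed (simp add: fps_hyp2F1_def)

lemma summable_franel_series:
  fixes t :: complex
  assumes "norm t < 1/8"
  shows "summable (\<lambda>n. of_nat (franel n) * t ^ n)"
  using summable_fps_geometric_bound[OF norm_franel_fps_nth, of t] assms
  by (simp add: franel_fps_def)

lemma omega_has_fps_expansion: "omega has_fps_expansion franel_fps"
  unfolding omega_eq_eval_fps by (rule has_fps_expansion_geometric_bound[OF norm_franel_fps_nth])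

lemma hyp2F1_has_fps_expansion:
  "hyp2F1 (1/3) (2/3) 1 has_fps_expansion fps_hyp2F1 (1/3) (2/3) 1"
  unfolding hyp2F1_eq_eval_fps by (rule has_fps_expansion_geometric_bound[OF norm_fps_hyp2F1_nth])

lemma franel_hyp2F1_has_fps_expansion:
  "(\<lambda>t. 1 / (1 - 2 * t) * hyp2F1 (1/3) (2/3) 1 (27 * t^2 / (1 - 2 * t) ^ 3))
     has_fps_expansion franel_fps"
proof -
  have "(\<lambda>t::complex. 27 * t^2 / (1 - 2 * t) ^ 3) has_fps_expansion fps_Z"
    unfolding fps_Z_def by (intro fps_expansion_intros) (simp add: fps_nth_power_0)
  from has_fps_expansion_compose[OF hyp2F1_has_fps_expansion this fps_Z_nth_0]
  have "(\<lambda>t. 1 / (1 - 2 * t) * hyp2F1 (1/3) (2/3) 1 (27 * t^2 / (1 - 2 * t) ^ 3)) has_fps_expansion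
      1 / (1 - 2 * fps_X) * (fps_hyp2F1 (1/3) (2/3) 1 oo fps_Z)"
    by (intro fps_expansion_intros) (simp_all add: o_def)
  also have "1 / (1 - 2 * fps_X) * (fps_hyp2F1 (1/3) (2/3) 1 oo fps_Z) = (franel_fps :: complex fps)"
    by (simp add: franel_fps_eq_hyp2F1 fps_divide_unit)
  finally show ?thesis .
qed

lemma franel_modular_has_fps_expansion:
  "(\<lambda>p. omega (p / (2 * (1 + p)^2))) has_fps_expansion (franel_fps oo fps_U)"
  "(\<lambda>p. (1 + p) * omega (p^2 / (4 * (1 + p)))) has_fps_expansion (franel_fps oo fps_U)"
proof -
  have "(\<lambda>p::complex. p / (2 * (1 + p)^2)) has_fps_expansion fps_U"
    unfolding fps_U_def by (intro fps_expansion_intros) (simp add: fps_nth_power_0)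
  from has_fps_expansion_compose[OF omega_has_fps_expansion this fps_U_nth_0]
  show "(\<lambda>p. omega (p / (2 * (1 + p)^2))) has_fps_expansion (franel_fps oo fps_U)"
    by (simp add: o_def)
  have "(\<lambda>p::complex. p^2 / (4 * (1 + p))) has_fps_expansion fps_V"
    unfolding fps_V_def by (intro fps_expansion_intros) simp
  from has_fps_expansion_compose[OF omega_has_fps_expansion this fps_V_nth_0]
  have "(\<lambda>p. (1 + p) * omega (p^2 / (4 * (1 + p))))
      has_fps_expansion (1 + fps_X) * (franel_fps oo fps_V)"
    by (intro fps_expansion_intros) (simp_all add: o_def)
  then show "(\<lambda>p. (1 + p) * omega (p^2 / (4 * (1 + p)))) has_fps_expansion (franel_fps oo fps_U)"
    by (simp add: franel_fps_modular_relation)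
qed

lemma franel_hyp2F1_eventually:
  "eventually (\<lambda>t. summable (\<lambda>n. of_nat (franel n) * t ^ n) \<and>
     omega t = 1 / (1 - 2 * t) * hyp2F1 (1/3) (2/3) 1 (27 * t^2 / (1 - 2 * t) ^ 3)) (nhds 0)"
proof -
  have "eventually (\<lambda>t::complex. norm t < 1/8) (nhds 0)"
    unfolding eventually_nhds_metric dist_norm by (intro exI[of _ "1/8"]) simp
  moreover have "eventually (\<lambda>t. omega t
      = 1 / (1 - 2 * t) * hyp2F1 (1/3) (2/3) 1 (27 * t^2 / (1 - 2 * t) ^ 3)) (nhds 0)"
    using omega_has_fps_expansion franel_hyp2F1_has_fps_expansion
    by (rule has_fps_expansion_imp_eventually_eq)
  ultimately show ?thesis
    by eventually_elim (simp add: summable_franel_series)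
qed

lemma franel_modular_eventually:
  "eventually (\<lambda>p. omega (p / (2 * (1 + p)^2)) = (1 + p) * omega (p^2 / (4 * (1 + p)))) (nhds 0)"
  by (rule has_fps_expansion_imp_eventually_eq[OF franel_modular_has_fps_expansion])

theorem mainTheorem13:
  shows "(\<exists>\<epsilon>>0. \<forall>t::complex. norm t < \<epsilon> \<longrightarrow>
            summable (\<lambda>n. of_nat (franel n) * t ^ n) \<and>
            omega t = 1 / (1 - 2 * t) *
              hyp2F1 (1/3) (2/3) 1 (27 * t^2 / (1 - 2 * t) ^ 3))
       \<and> (\<exists>\<epsilon>>0. \<forall>p::complex. norm p < \<epsilon> \<longrightarrow>
            omega (p / (2 * (1 + p)^2)) = (1 + p) * omega (p^2 / (4 * (1 + p))))"
  using franel_hyp2F1_eventually franel_modular_eventually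
  unfolding eventually_nhds_metric dist_norm by simp

end
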